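(* Let $m\ge1$, $N\ge1$ and let $i$ be an integer with $0\le i\le mN$. For all integers $b_1,\dots,b_N\in\{0,\dots,m\}$ with $\sum_{j=1}^N b_j=i$, $$\sum_{j=1}^N 2^{-b_j}\;\ge\;\Big(N-i+\lfloor i/N\rfloor N\Big)2^{-\lfloor i/N\rfloor}+\Big(i-\lfloor i/N\rfloor N\Big)2^{-\lceil i/N\rceil},$$ where the right-hand side is the value of $\sum_j 2^{-b_j}$ for the pattern in which $N-i+\lfloor i/N\rfloor N$ symbols contain $\lfloor i/N\rfloor$ erased bits and $i-\lfloor i/N\rfloor N$ symbols contain $\lceil i/N\rceil$ erased bits. Consequently, under the proportional multiplicity assignment, among all patterns of $i$ erased bits this evenly spread pattern is the worst case for the ASD decoding condition $\eta\ge K-1$, where $\eta=\sum_j 2^{-b_j}$.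
   Context: Setting: a Reed–Solomon code of length $N$ and dimension $K$ over $GF(2^m)$ whose symbols are sent as $m$ bits each over a binary erasure channel; $b_j$ is the number of erased bits in the $j$-th received symbol. Under the proportional multiplicity assignment (each of the $2^{b_j}$ candidates of symbol $j$ gets multiplicity $M2^{-b_j}$, $M>0$), the score is $S=M\eta$ and the cost is $C=\frac12M^2\eta$, and the ASD sufficient condition $S\ge\sqrt{2(K-1)C}$ is equivalent to $\eta\ge K-1$. *)

theory Defs
  imports Complex_Main
begin

end

theory Submission
  imports Defs
begin

text \<open>The sequence \<open>k \<mapsto> 2 powi k\<close> is convex and agrees with the line \<open>1 + k/2\<close> at
  \<open>k = -1\<close> and \<open>k = 0\<close>, so it lies above that line at every integer. Writing each term as
  \<open>2 powi (-q) * 2 powi (q - b\<^sub>j)\<close> with \<open>q = \<lfloor>i/N\<rfloor>\<close> and summing, the linear lower bounds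
  add up to a quantity depending only on \<open>\<Sum> b\<^sub>j = i\<close>, and it equals the value of the evenly
  spread pattern, for which every \<open>b\<^sub>j\<close> is \<open>q\<close> or \<open>q + 1\<close>, i.e. lies on the line.\<close>

lemma two_powi_ge_linear: "1 + of_int k / 2 \<le> (2::real) powi k"
proof (cases "k \<ge> 0")
  case True
  then obtain n where "k = int n" by (metis nonneg_eq_int)
  moreover have "1 + real n * 1 \<le> (1 + 1) ^ n"
    by (rule Bernoulli_inequality) simp
  ultimately show ?thesis by simp
next
  case False
  then obtain n where "k = - int n" by (metis nonpos_int_cases not_le order_less_imp_le)
  moreover have "1 + real n * (- 1 / 2) \<le> (1 + (- 1 / 2)) ^ n"
    by (rule Bernoulli_inequality) simp
  ultimately show ?thesis by (simp add: power_int_minus power_one_over inverse_eq_divide)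
qed

lemma two_powi_ge_chord:
  fixes b q :: int
  shows "(2::real) powi (- q) * (1 - of_int (b - q) / 2) \<le> 2 powi (- b)"
proof -
  have "(2::real) powi (- q) * (1 - of_int (b - q) / 2) = 2 powi (- q) * (1 + of_int (q - b) / 2)"
    by (simp add: field_simps)
  also have "\<dots> \<le> 2 powi (- q) * 2 powi (q - b)"
    by (intro mult_left_mono two_powi_ge_linear) simp
  also have "\<dots> = 2 powi (- b)"
    by (simp flip: power_int_add)
  finally show ?thesis .
qed

lemma sum_two_powi_ge_chord:
  fixes b :: "'a \<Rightarrow> int" and q :: int
  shows "(2::real) powi (- q) * (\<Sum>j\<in>A. 1 - of_int (b j - q) / 2) \<le> (\<Sum>j\<in>A. 2 powi (- b j))"
  unfolding sum_distrib_left by (intro sum_mono two_powi_ge_chord)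

lemma ceiling_divide_of_nat_eq:
  assumes "n > 0" and "\<not> n dvd m"
  shows "\<lceil>real m / real n\<rceil> = int (m div n) + 1"
proof -
  have "real m / real n = real (m div n) + real (m mod n) / real n"
    using assms(1) by (simp add: field_simps flip: of_nat_mult of_nat_add)
  moreover have "0 < m mod n" "m mod n < n"
    using assms by (auto simp: dvd_eq_mod_eq_0)
  ultimately show ?thesis
    by (simp add: ceiling_eq_iff)
qed

lemma even_spread_value_eq:
  fixes N i :: nat
  assumes "N \<ge> 1"
  shows "(real N - real i + real_of_int \<lfloor>real i / real N\<rfloor> * real N)
          * (2::real) powi (- \<lfloor>real i / real N\<rfloor>)
       + (real i - real_of_int \<lfloor>real i / real N\<rfloor> * real N)
          * (2::real) powi (- \<lceil>real i / real N\<rceil>)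
     = 2 powi (- int (i div N)) * (real N - real (i mod N) / 2)"
proof -
  have floor_eq: "\<lfloor>real i / real N\<rfloor> = int (i div N)"
    by (metis floor_divide_of_nat_eq of_int_of_nat_eq)
  have i_eq: "real i = real (i div N) * real N + real (i mod N)"
    by (simp flip: of_nat_mult of_nat_add)
  show ?thesis
  proof (cases "N dvd i")
    case True
    then show ?thesis using floor_eq i_eq by simp
  next
    case False
    then have "(2::real) powi (- \<lceil>real i / real N\<rceil>) = 2 powi (- int (i div N)) / 2"
      using assms by (simp add: ceiling_divide_of_nat_eq power_int_diff)
    then show ?thesis using floor_eq i_eq by (simp add: field_simps)
  qed
qed

theorem lemma4:
  fixes m N i :: nat and b :: "nat \<Rightarrow> nat"
  assumes "m \<ge> 1" and "N \<ge> 1" and "i \<le> m * N"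
    and "\<forall>j\<in>{1..N}. b j \<le> m"
    and "(\<Sum>j=1..N. b j) = i"
  shows "(\<Sum>j=1..N. (2::real) powi (- int (b j)))
     \<ge> (real N - real i + real_of_int \<lfloor>real i / real N\<rfloor> * real N)
          * (2::real) powi (- \<lfloor>real i / real N\<rfloor>)
       + (real i - real_of_int \<lfloor>real i / real N\<rfloor> * real N)
          * (2::real) powi (- \<lceil>real i / real N\<rceil>)"
proof -
  define q where "q = i div N"
  have "(\<Sum>j=1..N. 1 - real_of_int (int (b j) - int q) / 2)
      = real N - (real i - real N * real q) / 2"
    using assms(5) by (simp add: sum_subtractf sum_divide_distrib[symmetric] sum.distrib
                               flip: of_nat_sum)
  also have "\<dots> = real N - real (i mod N) / 2"
    by (simp add: q_def algebra_simps flip: of_nat_mult of_nat_add)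
  finally have "(2::real) powi (- int q) * (real N - real (i mod N) / 2)
      \<le> (\<Sum>j=1..N. 2 powi (- int (b j)))"
    using sum_two_powi_ge_chord[of "int q" "\<lambda>j. int (b j)" "{1..N}"] by simp
  then show ?thesis
    using even_spread_value_eq[OF assms(2)] by (simp add: q_def)
qed

end
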